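(* If $2^{\aleph_0}<\aleph_\omega$, then for all but finitely many $n<\omega$, $S^n_0\in J[\aleph_n]$.
   Context: $S^n_0=\{\alpha<\aleph_n\mid\mathrm{cf}(\alpha)=\aleph_0\}$. For regular uncountable $\kappa$, $J[\kappa]$ is the collection of all $S\subseteq\kappa$ for which there exist a club $C\subseteq\kappa$ and functions $f_i:\kappa\to[\kappa]^{<2}$ ($i<\kappa$) such that for every $\alpha\in S\cap C$, every regressive $f:\alpha\to\alpha$ and every cofinal $B\subseteq\alpha$, there is $i<\alpha$ with $\sup\{\beta\in B\mid f(\beta)\in f_i(\beta)\}=\alpha$. *)

theory Defs
  imports Main
begin

text \<open>Ordinals are modelled as elements of a well-ordered type 'a; the ordinal
  alpha is identified with the set of its predecessors.\<close>

definition below :: "'a::wellorder \<Rightarrow> 'a set" where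
  "below a = {x. x < a}"

fun aleph :: "nat \<Rightarrow> 'a::wellorder" where
  "aleph 0 = (LEAST a. infinite (below a))"
| "aleph (Suc n) = (LEAST a. ordLess2 (card_of (below (aleph n))) (card_of (below a)))"

definition cf_omega :: "'a::wellorder \<Rightarrow> bool" where
  "cf_omega a \<longleftrightarrow> (\<exists>s::nat \<Rightarrow> 'a. strict_mono s \<and> (\<forall>n. s n < a) \<and> (\<forall>b<a. \<exists>n. b < s n))"

definition S0 :: "nat \<Rightarrow> 'a::wellorder set" where
  "S0 n = {a. a < aleph n \<and> cf_omega a}"

definition club :: "'a::wellorder \<Rightarrow> 'a set \<Rightarrow> bool" where
  "club k C \<longleftrightarrow> C \<subseteq> below k
     \<and> (\<forall>b<k. \<exists>c\<in>C. b \<le> c)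
     \<and> (\<forall>a<k. (\<exists>x. x < a) \<and> (\<forall>b<a. \<exists>c\<in>C. b < c \<and> c < a) \<longrightarrow> a \<in> C)"

definition regressive_on :: "'a::wellorder \<Rightarrow> ('a \<Rightarrow> 'a) \<Rightarrow> bool" where
  "regressive_on a f \<longleftrightarrow> (\<forall>b<a. f b < a \<and> ((\<exists>x. x < b) \<longrightarrow> f b < b))"

definition cofinal_in :: "'a::wellorder \<Rightarrow> 'a set \<Rightarrow> bool" where
  "cofinal_in a B \<longleftrightarrow> B \<subseteq> below a \<and> (\<forall>b<a. \<exists>c\<in>B. b \<le> c)"

definition sup_eq :: "'a::wellorder set \<Rightarrow> 'a \<Rightarrow> bool" where
  "sup_eq X a \<longleftrightarrow> X \<subseteq> below a \<and> (\<forall>g<a. \<exists>b\<in>X. g < b)"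

definition small_subsets :: "'a::wellorder \<Rightarrow> 'a set set" where
  "small_subsets k = {X. X \<subseteq> below k \<and> finite X \<and> card X < 2}"

definition in_J :: "'a::wellorder \<Rightarrow> 'a set \<Rightarrow> bool" where
  "in_J k S \<longleftrightarrow> S \<subseteq> below k \<and>
    (\<exists>C F. club k C \<and>
       (\<forall>i<k. \<forall>b<k. F i b \<in> small_subsets k) \<and>
       (\<forall>a\<in>S \<inter> C. \<forall>f B. regressive_on a f \<and> cofinal_in a B \<longrightarrow>
           (\<exists>i<a. sup_eq {b\<in>B. f b \<in> F i b} a)))"

end

(* Let lambda = aleph_m and kappa = aleph_(m+1) with 2^aleph_0 < aleph_m.  Hausdorff's formula
   aleph_(m+1)^aleph_0 = aleph_(m+1) * aleph_m^aleph_0 gives lambda^aleph_0 = lambda.  Every beta < kappa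
   has at most lambda predecessors; transporting its order along an injection of beta into lambda gives
   a code in lambda x lambda, and distinct ordinals get distinct codes.  Now let alpha in [lambda, kappa)
   have countable cofinality, f be regressive and B cofinal, and pick beta_k in B cofinal in alpha.
   Countably many points of lambda x lambda separate the codes of the beta_k; these points, the resulting
   keys of the beta_k and the transported values f(beta_k) form a countable sequence over lambda, i.e.
   one of lambda^aleph_0 = lambda indices i < alpha, and F_i(beta) recovers f(beta) from the key of beta. *)

theory Submission
  imports Defs "HOL-Library.Nat_Bijection" "HOL-Library.Countable_Set"
begin

unbundle cardinal_syntax

lemma card_of_Times_le_infinite:
  assumes "infinite L" "|A| \<le>o |L|" "|B| \<le>o |L|"
  shows "|A \<times> B| \<le>o |L|"
  using card_of_Times_ordLeq_infinite_Field[of "|L|" A B, OF _ _ _ card_of_Card_order] assms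
  unfolding Field_card_of by blast

lemma card_of_Un_le_infinite:
  assumes "infinite L" "|A| \<le>o |L|" "|B| \<le>o |L|"
  shows "|A \<union> B| \<le>o |L|"
  using card_of_Un_ordLeq_infinite_Field[of "|L|" A B, OF _ _ _ card_of_Card_order] assms
  unfolding Field_card_of by blast

lemma below_mono: "a \<le> b \<Longrightarrow> below a \<subseteq> below b"
  unfolding below_def by auto

lemma infinite_below_aleph0:
  assumes "\<exists>a::'a::wellorder. infinite (below a)"
  shows "infinite (below (aleph 0 :: 'a))"
  using LeastI_ex[OF assms] by simp

lemma countable_below_aleph0: "countable (below (aleph 0 :: 'a::wellorder))"
proof -
  have finite: "finite (below x)" if "x < aleph 0" for x :: 'a
    using not_less_Least[of x "\<lambda>a. infinite (below a)"] that by simp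
  have "inj_on (\<lambda>x. card (below x)) (below (aleph 0 :: 'a))"
  proof (rule linorder_inj_onI')
    fix x y :: 'a assume "x \<in> below (aleph 0)" "y \<in> below (aleph 0)" "x < y"
    then have "finite (below y)" "below x \<subset> below y"
      using finite unfolding below_def by auto
    then have "card (below x) < card (below y)" by (rule psubset_card_mono)
    then show "card (below x) \<noteq> card (below y)" by simp
  qed
  then show ?thesis unfolding countable_def by blast
qed

lemma card_of_below_aleph_less_Suc:
  assumes "\<exists>a::'a::wellorder. |below (aleph n :: 'a)| <o |below a|"
  shows "|below (aleph n :: 'a)| <o |below (aleph (Suc n) :: 'a)|"
  using LeastI_ex[OF assms] by simp

lemma card_of_below_less_aleph_Suc:
  assumes "(a::'a::wellorder) < aleph (Suc n)"
  shows "|below a| \<le>o |below (aleph n :: 'a)|"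
proof -
  have "\<not> |below (aleph n :: 'a)| <o |below a|"
    using assms not_less_Least[of a "\<lambda>a. |below (aleph n :: 'a)| <o |below a|"] by simp
  then show ?thesis using ordLess_or_ordLeq[OF card_of_Well_order card_of_Well_order] by blast
qed

lemma aleph_less_Suc:
  assumes "\<exists>a::'a::wellorder. |below (aleph n :: 'a)| <o |below a|"
  shows "aleph n < (aleph (Suc n) :: 'a)"
proof (rule ccontr)
  assume "\<not> aleph n < (aleph (Suc n) :: 'a)"
  then have "|below (aleph (Suc n) :: 'a)| \<le>o |below (aleph n :: 'a)|"
    by (intro card_of_mono1 below_mono) simp
  then show False using card_of_below_aleph_less_Suc[OF assms] not_ordLess_ordLeq by blast
qed

lemma aleph_mono:
  assumes "\<forall>n. \<exists>a::'a::wellorder. |below (aleph n :: 'a)| <o |below a|" and "m \<le> n"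
  shows "aleph m \<le> (aleph n :: 'a)"
  using lift_Suc_mono_le[of aleph, OF _ assms(2)] aleph_less_Suc assms(1) less_imp_le by metis

lemma infinite_below_aleph:
  assumes "\<exists>a::'a::wellorder. infinite (below a)"
    and "\<forall>n. \<exists>a::'a. |below (aleph n :: 'a)| <o |below a|"
  shows "infinite (below (aleph n :: 'a))"
  using infinite_below_aleph0[OF assms(1)] below_mono[OF aleph_mono[OF assms(2), of 0 n]]
    finite_subset by blast

definition seqs :: "'a::wellorder \<Rightarrow> (nat \<Rightarrow> 'a) set" where
  "seqs a = {g. \<forall>j. g j < a}"

lemma card_of_seqs_le_Pow_nat:
  assumes "countable (below k)"
  shows "|seqs k| \<le>o |Pow (UNIV :: nat set)|"
proof -
  obtain c :: "'a \<Rightarrow> nat" where c: "inj_on c (below k)"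
    using assms unfolding countable_def by blast
  define graph where "graph g = range (\<lambda>j. prod_encode (j, c (g j)))" for g :: "nat \<Rightarrow> 'a"
  have "inj_on graph (seqs k)"
  proof (rule inj_onI)
    fix g g' assume g: "g \<in> seqs k" and g': "g' \<in> seqs k" and eq: "graph g = graph g'"
    have "g j = g' j" for j
    proof -
      have "prod_encode (j, c (g j)) \<in> graph g'" using eq unfolding graph_def by blast
      then have "c (g j) = c (g' j)" unfolding graph_def by auto
      then show ?thesis using c g g' unfolding inj_on_def seqs_def below_def by blast
    qed
    then show "g = g'" by blast
  qed
  then show ?thesis by (rule card_of_ordLeqI) simp
qed

lemma seqs_bounded:
  assumes "infinite (below lam)" and small: "\<forall>b<k. |below b| \<le>o |below lam|"
    and big: "|below lam| <o |below k|" and g: "g \<in> seqs k"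
  shows "\<exists>d<k. \<forall>j. g j < d"
proof (rule ccontr)
  assume unbounded: "\<not> ?thesis"
  have "below k \<subseteq> range g \<union> (\<Union>j. below (g j))"
  proof
    fix x assume "x \<in> below k"
    then obtain j where "x \<le> g j" using unbounded unfolding below_def by (force simp: not_less)
    then show "x \<in> range g \<union> (\<Union>j. below (g j))"
      unfolding below_def by (auto simp: order.order_iff_strict)
  qed
  moreover have "|range g \<union> (\<Union>j. below (g j))| \<le>o |below lam|"
  proof (rule card_of_Un_le_infinite[OF assms(1)])
    have "|UNIV :: nat set| \<le>o |below lam|" using assms(1) infinite_iff_card_of_nat by blast
    then show "|range g| \<le>o |below lam|" using card_of_image ordLeq_transitive by blast
    show "|\<Union>j. below (g j)| \<le>o |below lam|"
      using g small \<open>|UNIV :: nat set| \<le>o |below lam|\<close> unfolding seqs_def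
      by (intro card_of_UNION_ordLeq_infinite[OF assms(1)]) auto
  qed
  ultimately have "|below k| \<le>o |below lam|" by (rule ordLeq_transitive[OF card_of_mono1])
  with big show False using not_ordLess_ordLeq by blast
qed

definition embed_below :: "'a::wellorder \<Rightarrow> 'a \<Rightarrow> 'a \<Rightarrow> 'a" where
  "embed_below lam b = (SOME e. inj_on e (below b) \<and> e ` below b \<subseteq> below lam)"

lemma embed_below:
  assumes "|below b| \<le>o |below lam|"
  shows "inj_on (embed_below lam b) (below b)" "embed_below lam b ` below b \<subseteq> below lam"
proof -
  have "\<exists>e. inj_on e (below b) \<and> e ` below b \<subseteq> below lam"
    using assms unfolding card_of_ordLeq[symmetric] by blast
  then have "inj_on (embed_below lam b) (below b) \<and> embed_below lam b ` below b \<subseteq> below lam"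
    unfolding embed_below_def by (rule someI_ex)
  then show "inj_on (embed_below lam b) (below b)" "embed_below lam b ` below b \<subseteq> below lam"
    by blast+
qed

lemma card_of_seqs_le_Times:
  fixes k lam :: "'a::wellorder"
  assumes small: "\<forall>b<k. |below b| \<le>o |below lam|" and bounded: "\<forall>g\<in>seqs k. \<exists>d<k. \<forall>j. g j < d"
  shows "|seqs k| \<le>o |below k \<times> seqs lam|"
proof -
  define bound where "bound g = (SOME d. d < k \<and> (\<forall>j. g j < d))" for g :: "nat \<Rightarrow> 'a"
  have bound: "bound g < k" "\<forall>j. g j \<in> below (bound g)" if "g \<in> seqs k" for g
    using someI_ex[OF bounded[rule_format, OF that]] unfolding bound_def below_def by auto
  define G where "G g = (bound g, embed_below lam (bound g) \<circ> g)" for g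
  have "inj_on G (seqs k)"
  proof (rule inj_onI)
    fix g g' assume g: "g \<in> seqs k" and g': "g' \<in> seqs k" and eq: "G g = G g'"
    have same_bound: "bound g' = bound g" using eq unfolding G_def by simp
    have inj: "inj_on (embed_below lam (bound g)) (below (bound g))"
      using embed_below(1) small bound(1)[OF g] by blast
    have "g j = g' j" for j
    proof (rule inj_onD[OF inj])
      show "embed_below lam (bound g) (g j) = embed_below lam (bound g) (g' j)"
        using eq same_bound unfolding G_def by (simp add: fun_eq_iff)
      show "g j \<in> below (bound g)" "g' j \<in> below (bound g)"
        using bound(2) g g' same_bound by metis+
    qed
    then show "g = g'" by blast
  qed
  moreover have "G g \<in> below k \<times> seqs lam" if "g \<in> seqs k" for g
    using bound[OF that] embed_below(2)[OF small[rule_format, OF bound(1)[OF that]]]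
    unfolding G_def seqs_def by (auto simp: below_def)
  ultimately show ?thesis by (rule card_of_ordLeqI)
qed

lemma card_of_seqs_aleph_le:
  fixes L :: "'b set"
  assumes A1: "\<exists>a::'a::wellorder. infinite (below a)"
    and A2: "\<forall>n. \<exists>a::'a. |below (aleph n :: 'a)| <o |below a|"
    and pow: "|Pow (UNIV :: nat set)| \<le>o |L|" and aleph: "|below (aleph m :: 'a)| \<le>o |L|"
  shows "|seqs (aleph m :: 'a)| \<le>o |L|"
  using aleph
proof (induction m)
  case 0
  show ?case using card_of_seqs_le_Pow_nat[OF countable_below_aleph0] pow by (rule ordLeq_transitive)
next
  case (Suc m)
  have "infinite (Pow (UNIV :: nat set))" using finite_Pow_iff infinite_UNIV_nat by blast
  then have "infinite L" using card_of_ordLeq_finite[OF pow] by blast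
  have "aleph m \<le> (aleph (Suc m) :: 'a)" using aleph_less_Suc[OF A2[rule_format]] by (rule less_imp_le)
  then have "|below (aleph m :: 'a)| \<le>o |L|"
    by (rule ordLeq_transitive[OF card_of_mono1[OF below_mono] Suc.prems])
  then have IH: "|seqs (aleph m :: 'a)| \<le>o |L|" by (rule Suc.IH)
  have small: "\<forall>b<(aleph (Suc m) :: 'a). |below b| \<le>o |below (aleph m :: 'a)|"
    using card_of_below_less_aleph_Suc by blast
  have "\<forall>g\<in>seqs (aleph (Suc m) :: 'a). \<exists>d<aleph (Suc m). \<forall>j. g j < d"
    using seqs_bounded[OF infinite_below_aleph[OF A1 A2] small card_of_below_aleph_less_Suc[OF A2[rule_format]]]
    by blast
  then have "|seqs (aleph (Suc m) :: 'a)| \<le>o |below (aleph (Suc m) :: 'a) \<times> seqs (aleph m :: 'a)|"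
    by (rule card_of_seqs_le_Times[OF small])
  then show ?case
    using card_of_Times_le_infinite[OF \<open>infinite L\<close> Suc.prems IH] by (rule ordLeq_transitive)
qed

lemma strict_mono_on_below_self_le:
  fixes f :: "'a::wellorder \<Rightarrow> 'a"
  assumes mono: "strict_mono_on (below b) f" and into: "f ` below b \<subseteq> below b"
  shows "x < b \<Longrightarrow> x \<le> f x"
proof (induction x rule: less_induct)
  case (less x)
  show ?case
  proof (rule ccontr)
    assume "\<not> x \<le> f x"
    then have "f x < x" by simp
    moreover have "f x < b" using into less.prems unfolding below_def by blast
    ultimately have "f x \<le> f (f x)" "f (f x) < f x"
      using less.IH strict_mono_onD[OF mono] less.prems unfolding below_def by auto
    then show False by simp
  qed
qed

lemma strict_mono_on_below_imp_le:
  fixes f :: "'a::wellorder \<Rightarrow> 'a"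
  assumes mono: "strict_mono_on (below b) f" and into: "f ` below b \<subseteq> below c"
  shows "b \<le> c"
proof (rule ccontr)
  assume "\<not> b \<le> c"
  then have "c < b" by simp
  then have "f ` below b \<subseteq> below b" using into below_mono[of c b] by fastforce
  then have "c \<le> f c" using strict_mono_on_below_self_le[OF mono] \<open>c < b\<close> by blast
  moreover have "f c < c" using into \<open>c < b\<close> unfolding below_def by blast
  ultimately show False by simp
qed

definition order_code :: "'a::wellorder \<Rightarrow> 'a \<Rightarrow> ('a \<times> 'a) set" where
  "order_code lam b = {(embed_below lam b x, embed_below lam b y) | x y. x \<le> y \<and> y < b}"

lemma order_code_subset:
  assumes "|below b| \<le>o |below lam|"
  shows "order_code lam b \<subseteq> below lam \<times> below lam"
proof
  fix p assume "p \<in> order_code lam b"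
  then obtain x y where p: "p = (embed_below lam b x, embed_below lam b y)" "x \<le> y" "y < b"
    unfolding order_code_def by blast
  then have "x \<in> below b" "y \<in> below b" unfolding below_def by auto
  then show "p \<in> below lam \<times> below lam" using embed_below(2)[OF assms] p(1) by blast
qed

lemma order_code_subset_imp_le:
  assumes b: "|below b| \<le>o |below lam|" and c: "|below c| \<le>o |below lam|"
    and sub: "order_code lam b \<subseteq> order_code lam c"
  shows "b \<le> c"
proof -
  let ?e = "embed_below lam b" and ?e' = "embed_below lam c"
  have in_code: "\<exists>x' y'. ?e x = ?e' x' \<and> ?e y = ?e' y' \<and> x' \<le> y' \<and> y' < c"
    if "x \<le> y" "y < b" for x y
  proof -
    have "(?e x, ?e y) \<in> order_code lam c" using sub that unfolding order_code_def by blast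
    then show ?thesis unfolding order_code_def by blast
  qed
  define phi where "phi x = inv_into (below c) ?e' (?e x)" for x
  have phi: "phi x < c" "?e' (phi x) = ?e x" if "x < b" for x
  proof -
    have "?e x \<in> ?e' ` below c"
      using in_code[OF order.refl that] unfolding below_def by auto
    then show "phi x < c" "?e' (phi x) = ?e x"
      unfolding phi_def using inv_into_into[of "?e x" ?e' "below c"] f_inv_into_f[of "?e x" ?e' "below c"]
      by (simp_all add: below_def)
  qed
  have "strict_mono_on (below b) phi"
  proof (rule strict_mono_onI)
    fix x y assume "x \<in> below b" "y \<in> below b" "x < y"
    then have x: "x < b" and y: "y < b" unfolding below_def by auto
    obtain x' y' where xy: "?e x = ?e' x'" "?e y = ?e' y'" "x' \<le> y'" "y' < c"
      using in_code[OF less_imp_le[OF \<open>x < y\<close>] y] by blast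
    have inj_b: "inj_on ?e (below b)" and inj_c: "inj_on ?e' (below c)"
      using embed_below(1) b c by blast+
    have "phi x = x'" "phi y = y'"
      using inj_onD[OF inj_c, of "phi x" x'] inj_onD[OF inj_c, of "phi y" y'] phi[OF x] phi[OF y] xy
      by (simp_all add: below_def)
    moreover have "phi x \<noteq> phi y"
    proof
      assume "phi x = phi y"
      then have "?e x = ?e y" using phi(2)[OF x] phi(2)[OF y] by simp
      then have "x = y" using inj_onD[OF inj_b] x y by (simp add: below_def)
      with \<open>x < y\<close> show False by simp
    qed
    ultimately show "phi x < phi y" using xy by simp
  qed
  moreover have "phi ` below b \<subseteq> below c" using phi unfolding below_def by blast
  ultimately show "b \<le> c" by (rule strict_mono_on_below_imp_le)
qed

lemma order_code_inj:
  assumes "|below b| \<le>o |below lam|" "|below c| \<le>o |below lam|"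
    and "order_code lam b = order_code lam c"
  shows "b = c"
  using order_code_subset_imp_le[of b lam c] order_code_subset_imp_le[of c lam b] assms by simp

lemma separating_sequence:
  fixes S :: "nat \<Rightarrow> 'b set"
  assumes "\<forall>k. S k \<subseteq> Y" and "Y \<noteq> {}"
  obtains d :: "nat \<Rightarrow> 'b" where "range d \<subseteq> Y"
    and "\<And>k l. {j. d j \<in> S k} = {j. d j \<in> S l} \<Longrightarrow> S k = S l"
proof -
  define witness where
    "witness k l = (SOME p. p \<in> Y \<and> (S k \<noteq> S l \<longrightarrow> (p \<in> S k \<longleftrightarrow> p \<notin> S l)))" for k l
  have witness: "witness k l \<in> Y \<and> (S k \<noteq> S l \<longrightarrow> (witness k l \<in> S k \<longleftrightarrow> witness k l \<notin> S l))"
    for k l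
  proof -
    have "\<exists>p. p \<in> Y \<and> (S k \<noteq> S l \<longrightarrow> (p \<in> S k \<longleftrightarrow> p \<notin> S l))"
      using assms by (cases "S k = S l") blast+
    then show ?thesis unfolding witness_def by (rule someI_ex)
  qed
  define d where "d j = witness (fst (prod_decode j)) (snd (prod_decode j))" for j
  show ?thesis
  proof
    show "range d \<subseteq> Y" using witness unfolding d_def by blast
  next
    fix k l assume "{j. d j \<in> S k} = {j. d j \<in> S l}"
    then have "witness k l \<in> S k \<longleftrightarrow> witness k l \<in> S l"
      unfolding d_def by (metis (mono_tags) mem_Collect_eq prod_encode_inverse fst_conv snd_conv)
    then show "S k = S l" using witness by blast
  qed
qed

(* A guess (d, K, ys) proposes at b the z < b that embed_below sends to ys k, for the first k whose key K k is
   the key of b under the test points d.  If no key matches, LEAST is junk, but the proposal is still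
   a set of at most one element. *)
type_synonym 'a guess = "(nat \<Rightarrow> 'a \<times> 'a) \<times> (nat \<Rightarrow> nat set) \<times> (nat \<Rightarrow> 'a)"

definition code_key :: "'a::wellorder \<Rightarrow> (nat \<Rightarrow> 'a \<times> 'a) \<Rightarrow> 'a \<Rightarrow> nat set" where
  "code_key lam d b = {j. d j \<in> order_code lam b}"

fun guessed :: "'a::wellorder \<Rightarrow> 'a guess \<Rightarrow> 'a \<Rightarrow> 'a set" where
  "guessed lam (d, K, ys) b =
     {z. z < b \<and> embed_below lam b z = ys (LEAST k. K k = code_key lam d b)}"

definition guesses :: "'a::wellorder \<Rightarrow> 'a guess set" where
  "guesses lam = {(d, K, ys). range d \<subseteq> below lam \<times> below lam \<and> ys \<in> seqs lam}"

lemma guessed_small: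
  assumes "b < kap" "|below b| \<le>o |below lam|"
  shows "guessed lam t b \<in> small_subsets kap"
proof -
  obtain d K ys where t: "t = (d, K, ys)" by (cases t) auto
  let ?e = "embed_below lam b" and ?y = "ys (LEAST k. K k = code_key lam d b)"
  have sub: "guessed lam t b \<subseteq> {inv_into (below b) ?e ?y}"
  proof
    fix z assume "z \<in> guessed lam t b"
    then have "z \<in> below b" "?e z = ?y" by (simp_all add: t below_def)
    then show "z \<in> {inv_into (below b) ?e ?y}"
      using inv_into_f_f[OF embed_below(1)[OF assms(2)]] by force
  qed
  then have "finite (guessed lam t b)" by (rule finite_subset) simp
  moreover have "card (guessed lam t b) < 2"
    using card_mono[OF _ sub] by simp
  moreover have "guessed lam t b \<subseteq> below kap"
    using assms(1) by (auto simp: t below_def)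
  ultimately show ?thesis unfolding small_subsets_def by blast
qed

lemma card_of_Pow_nat_le_seqs:
  assumes "infinite (below lam)"
  shows "|Pow (UNIV :: nat set)| \<le>o |seqs lam|"
proof -
  obtain x0 where x0: "x0 \<in> below lam" using infinite_imp_nonempty[OF assms] by blast
  have "infinite (below lam - {x0})" using assms by simp
  then obtain x1 where x1: "x1 \<in> below lam" "x1 \<noteq> x0" using infinite_imp_nonempty by blast
  define G where "G A = (\<lambda>j. if j \<in> A then x1 else x0)" for A :: "nat set"
  have "inj_on G (Pow UNIV)"
  proof (rule inj_onI)
    fix A A' assume "G A = G A'"
    then have "j \<in> A \<longleftrightarrow> j \<in> A'" for j
      using x1(2) fun_cong[of "G A" "G A'" j] unfolding G_def by (auto split: if_splits)
    then show "A = A'" by blast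
  qed
  moreover have "G A \<in> seqs lam" for A using x0 x1 unfolding G_def seqs_def below_def by auto
  ultimately show ?thesis by (rule card_of_ordLeqI)
qed

lemma card_of_guesses_le:
  assumes inf: "infinite (below lam)" and seqs: "|seqs lam| \<le>o |below lam|"
  shows "|guesses lam| \<le>o |below lam|"
proof -
  define G where "G t = (case t of (d, K, ys) \<Rightarrow> (fst \<circ> d, snd \<circ> d, prod_encode ` Sigma UNIV K, ys))"
    for t :: "'a guess"
  have "inj_on G (guesses lam)"
  proof (rule inj_onI)
    fix t t' :: "'a guess" assume eq: "G t = G t'"
    obtain d K ys d' K' ys' where t: "t = (d, K, ys)" and t': "t' = (d', K', ys')"
      by (metis prod.exhaust)
    have "fst \<circ> d = fst \<circ> d'" "snd \<circ> d = snd \<circ> d'" "ys = ys'"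
      and Sigma: "prod_encode ` Sigma UNIV K = prod_encode ` Sigma UNIV K'"
      using eq unfolding G_def t t' by simp_all
    then have "d = d'" by (metis prod.expand comp_apply ext)
    moreover have "K = K'"
    proof
      fix k
      have "Sigma UNIV K = Sigma UNIV K'" using Sigma by (simp add: inj_image_eq_iff[OF inj_prod_encode])
      then show "K k = K' k" by blast
    qed
    ultimately show "t = t'" using t t' \<open>ys = ys'\<close> by simp
  qed
  moreover have "G t \<in> seqs lam \<times> seqs lam \<times> Pow UNIV \<times> seqs lam" if "t \<in> guesses lam" for t
  proof -
    obtain d K ys where "t = (d, K, ys)" by (metis prod.exhaust)
    then show ?thesis using that unfolding G_def guesses_def seqs_def
      by (auto simp: image_subset_iff mem_Times_iff below_def)
  qed
  ultimately have "|guesses lam| \<le>o |seqs lam \<times> seqs lam \<times> Pow (UNIV :: nat set) \<times> seqs lam|"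
    by (rule card_of_ordLeqI)
  moreover have "|seqs lam \<times> seqs lam \<times> Pow (UNIV :: nat set) \<times> seqs lam| \<le>o |below lam|"
    using card_of_Pow_nat_le_seqs[OF inf] seqs
    by (intro card_of_Times_le_infinite[OF inf] seqs) (rule ordLeq_transitive)
  ultimately show ?thesis by (rule ordLeq_transitive)
qed

lemma ex_guess_capturing:
  fixes beta :: "nat \<Rightarrow> 'a::wellorder"
  assumes small: "\<forall>k. |below (beta k)| \<le>o |below lam|" and ne: "below lam \<noteq> {}"
    and less: "\<forall>k. f (beta k) < beta k"
  shows "\<exists>t\<in>guesses lam. \<forall>k. f (beta k) \<in> guessed lam t (beta k)"
proof -
  obtain d where d: "range d \<subseteq> below lam \<times> below lam"
    and sep: "\<And>k l. code_key lam d (beta k) = code_key lam d (beta l) \<Longrightarrow>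
      order_code lam (beta k) = order_code lam (beta l)"
    using separating_sequence[of "\<lambda>k. order_code lam (beta k)" "below lam \<times> below lam"]
      order_code_subset small ne unfolding code_key_def by blast
  have key_inj: "beta k = beta l" if "code_key lam d (beta k) = code_key lam d (beta l)" for k l
    using order_code_inj small sep[OF that] by blast
  define t where "t = (d, \<lambda>k. code_key lam d (beta k), \<lambda>k. embed_below lam (beta k) (f (beta k)))"
  have "t \<in> guesses lam"
    using d embed_below(2)[OF small[rule_format]] less
    unfolding t_def guesses_def seqs_def below_def by blast
  moreover have "f (beta k) \<in> guessed lam t (beta k)" for k
  proof -
    let ?k0 = "LEAST k'. code_key lam d (beta k') = code_key lam d (beta k)"
    have "code_key lam d (beta ?k0) = code_key lam d (beta k)" by (rule LeastI) (rule refl)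
    then have "beta ?k0 = beta k" by (rule key_inj)
    then show ?thesis using less unfolding t_def by simp
  qed
  ultimately show ?thesis by blast
qed

lemma cf_omega_cofinal_seq:
  fixes a :: "'a::wellorder"
  assumes "cf_omega a" and B: "cofinal_in a B"
  obtains beta :: "nat \<Rightarrow> 'a" where "\<forall>k. beta k \<in> B" "\<forall>g<a. \<exists>k. g < beta k" "\<forall>k. \<exists>x. x < beta k"
proof -
  obtain s :: "nat \<Rightarrow> 'a" where s: "strict_mono s" "\<forall>n. s n < a" "\<forall>b<a. \<exists>n. b < s n"
    using assms(1) unfolding cf_omega_def by blast
  have "\<forall>k. \<exists>c\<in>B. s (Suc k) \<le> c" using B s(2) unfolding cofinal_in_def by blast
  then obtain beta where beta: "\<forall>k. beta k \<in> B \<and> s (Suc k) \<le> beta k" by metis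
  have above: "s k < beta k" for k
    using beta strict_monoD[OF s(1), of k "Suc k"] by (meson lessI order.strict_trans2)
  show ?thesis
  proof (rule that)
    show "\<forall>k. beta k \<in> B" using beta by blast
    show "\<forall>g<a. \<exists>k. g < beta k" using s(3) above by (meson order.strict_trans)
    show "\<forall>k. \<exists>x. x < beta k" using above by blast
  qed
qed

lemma club_final_segment:
  assumes "lam < kap"
  shows "club kap {a. lam \<le> a \<and> a < kap}"
  unfolding club_def
proof (intro conjI allI impI)
  show "{a. lam \<le> a \<and> a < kap} \<subseteq> below kap" unfolding below_def by blast
next
  fix b assume "b < kap"
  then show "\<exists>c\<in>{a. lam \<le> a \<and> a < kap}. b \<le> c"
    using assms by (intro bexI[of _ "max b lam"]) (auto simp: max_def)
next
  fix a assume "a < kap" and limit: "(\<exists>x. x < a) \<and> (\<forall>b<a. \<exists>c\<in>{a. lam \<le> a \<and> a < kap}. b < c \<and> c < a)"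
  then obtain c where "lam \<le> c" "c < a" by blast
  then show "a \<in> {a. lam \<le> a \<and> a < kap}" using \<open>a < kap\<close> by simp
qed

lemma ex_guess_sup_eq:
  fixes lam kap :: "'a::wellorder"
  assumes small: "\<forall>b<kap. |below b| \<le>o |below lam|" and inf: "infinite (below lam)"
    and a: "a < kap" "cf_omega a" and f: "regressive_on a f" and B: "cofinal_in a B"
  shows "\<exists>t\<in>guesses lam. sup_eq {b\<in>B. f b \<in> guessed lam t b} a"
proof -
  obtain beta :: "nat \<Rightarrow> 'a" where
    beta: "\<forall>k. beta k \<in> B" "\<forall>g<a. \<exists>k. g < beta k" "\<forall>k. \<exists>x. x < beta k"
    using cf_omega_cofinal_seq[OF a(2) B] by blast
  have beta_less: "beta k < a" for k using beta(1) B unfolding cofinal_in_def below_def by blast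
  have "\<forall>k. f (beta k) < beta k"
    using f beta(3) beta_less unfolding regressive_on_def by blast
  moreover have "\<forall>k. |below (beta k)| \<le>o |below lam|"
    using small less_trans[OF beta_less a(1)] by blast
  moreover have "below lam \<noteq> {}" using inf by auto
  ultimately obtain t where t: "t \<in> guesses lam" "\<forall>k. f (beta k) \<in> guessed lam t (beta k)"
    using ex_guess_capturing by blast
  have "sup_eq {b\<in>B. f b \<in> guessed lam t b} a"
    unfolding sup_eq_def
  proof
    show "{b\<in>B. f b \<in> guessed lam t b} \<subseteq> below a" using B unfolding cofinal_in_def by blast
    show "\<forall>g<a. \<exists>b\<in>{b\<in>B. f b \<in> guessed lam t b}. g < b" using beta(1,2) t(2) by blast
  qed
  with t(1) show ?thesis by blast
qed

lemma in_J_cf_omega: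
  fixes lam kap :: "'a::wellorder"
  assumes "lam < kap" and small: "\<forall>b<kap. |below b| \<le>o |below lam|"
    and inf: "infinite (below lam)" and seqs: "|seqs lam| \<le>o |below lam|"
  shows "in_J kap {a. a < kap \<and> cf_omega a}"
proof -
  obtain enc where enc: "inj_on enc (guesses lam)" "enc ` guesses lam \<subseteq> below lam"
    using card_of_guesses_le[OF inf seqs] unfolding card_of_ordLeq[symmetric] by blast
  define F where "F i = guessed lam (inv_into (guesses lam) enc i)" for i
  \<comment> \<open>On the club [lam, kap) every index enc t < lam is below the ordinal under consideration.\<close>
  have guess: "\<exists>i<a. sup_eq {b\<in>B. f b \<in> F i b} a"
    if a: "a < kap" "cf_omega a" "lam \<le> a" and f: "regressive_on a f" and B: "cofinal_in a B"
    for a f B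
  proof -
    obtain t where t: "t \<in> guesses lam" "sup_eq {b\<in>B. f b \<in> guessed lam t b} a"
      using ex_guess_sup_eq[OF small inf a(1,2) f B] by blast
    moreover have "F (enc t) = guessed lam t" unfolding F_def using inv_into_f_f[OF enc(1) t(1)] by simp
    moreover have "enc t < a" using enc(2) t(1) a(3) unfolding below_def by auto
    ultimately show ?thesis by auto
  qed
  have small_F: "F i b \<in> small_subsets kap" if "b < kap" for i b
    unfolding F_def using guessed_small that small by blast
  show ?thesis
    unfolding in_J_def
  proof (intro conjI exI)
    show "{a. a < kap \<and> cf_omega a} \<subseteq> below kap" unfolding below_def by blast
    show "club kap {a. lam \<le> a \<and> a < kap}" by (rule club_final_segment[OF assms(1)])
    show "\<forall>i<kap. \<forall>b<kap. F i b \<in> small_subsets kap" using small_F by blast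
    show "\<forall>a\<in>{a. a < kap \<and> cf_omega a} \<inter> {a. lam \<le> a \<and> a < kap}. \<forall>f B.
        regressive_on a f \<and> cofinal_in a B \<longrightarrow> (\<exists>i<a. sup_eq {b\<in>B. f b \<in> F i b} a)"
      using guess by blast
  qed
qed

lemma in_J_S0_Suc:
  assumes A1: "\<exists>a::'a::wellorder. infinite (below a)"
    and A2: "\<forall>n. \<exists>a::'a. |below (aleph n :: 'a)| <o |below a|"
    and pow: "|Pow (UNIV :: nat set)| \<le>o |below (aleph m :: 'a)|"
  shows "in_J (aleph (Suc m) :: 'a) (S0 (Suc m))"
proof -
  have inf: "infinite (below (aleph m :: 'a))" by (rule infinite_below_aleph[OF A1 A2])
  have seqs: "|seqs (aleph m :: 'a)| \<le>o |below (aleph m :: 'a)|"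
    by (rule card_of_seqs_aleph_le[OF A1 A2 pow card_of_mono1[OF subset_refl]])
  have small: "\<forall>b<(aleph (Suc m) :: 'a). |below b| \<le>o |below (aleph m :: 'a)|"
    using card_of_below_less_aleph_Suc by blast
  show ?thesis
    unfolding S0_def by (rule in_J_cf_omega[OF aleph_less_Suc[OF A2[rule_format]] small inf seqs])
qed

theorem corollary5p6:
  assumes "\<exists>a::'a::wellorder. infinite (below a)"
    and "\<forall>n. \<exists>a::'a. ordLess2 (card_of (below (aleph n :: 'a))) (card_of (below a))"
    and "\<exists>n. ordLess2 (card_of (Pow (UNIV :: nat set))) (card_of (below (aleph n :: 'a)))"
  shows "finite {n. \<not> in_J (aleph n :: 'a) (S0 n)}"
proof -
  obtain N where N: "|Pow (UNIV :: nat set)| <o |below (aleph N :: 'a)|" using assms(3) by blast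
  have "in_J (aleph n :: 'a) (S0 n)" if "N < n" for n
  proof -
    have n: "Suc (n - 1) = n" and "N \<le> n - 1" using that by arith+
    have "|Pow (UNIV :: nat set)| \<le>o |below (aleph (n - 1) :: 'a)|"
      using ordLess_imp_ordLeq[OF N] card_of_mono1[OF below_mono[OF aleph_mono[OF assms(2) \<open>N \<le> n - 1\<close>]]]
      by (rule ordLeq_transitive)
    then have "in_J (aleph (Suc (n - 1)) :: 'a) (S0 (Suc (n - 1)))" by (rule in_J_S0_Suc[OF assms(1,2)])
    then show ?thesis by (simp only: n)
  qed
  then have "{n. \<not> in_J (aleph n :: 'a) (S0 n)} \<subseteq> {..N}" by (auto simp flip: not_less)
  then show ?thesis by (rule finite_subset) simp
qed

end
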